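(* Let $d\ge 1$, $0<\mu\le L$, let $A\in\mathbb{R}^{d\times d}$ be symmetric with $\mu I\preceq A\preceq LI$, let $b\in\mathbb{R}^d$, and let $f(x)=\frac12 x^\top Ax+b^\top x$. Let $x_0\in\mathbb{R}^d$ be arbitrary and let $\{x_t\},\{G_t\}$ be generated by Sharpened-BFGS for quadratics (defined in the context), and assume $\nabla f(x_t)\neq 0$ for all $t$ considered. Then for all $t\ge 0$, $$\theta(A,G_t,x_{t+1}-x_t)\le 1-\frac{\mu}{L},$$ and consequently $\lambda_t\le \left(1-\frac{\mu}{L}\right)^t\lambda_0$ for all $t\ge 0$, where $\lambda_t:=\lambda_f(x_t)$.
   Context: For symmetric positive definite $A,G\in\mathbb{R}^{d\times d}$ and $u\in\mathbb{R}^d\setminus\{0\}$, the BFGS operator is $\mathrm{BFGS}(A,G,u):=G-\frac{Guu^\top G}{u^\top Gu}+\frac{Auu^\top A}{u^\top Au}$. The greedy vector is $\bar u(A,G):=\arg\max_{u\in\{e_1,\dots,e_d\}}\frac{u^\top Gu}{u^\top Au}$ (ties broken arbitrarily), where $e_i$ is the $i$-th standard basis vector. Define $\theta(A,G,u):=\left(\frac{u^\top (G-A)A^{-1}(G-A)u}{u^\top GA^{-1}Gu}\right)^{1/2}$. The Newton decrement is $\lambda_f(x):=\sqrt{\nabla f(x)^\top\nabla^2 f(x)^{-1}\nabla f(x)}$. Sharpened-BFGS for quadratics: set $G_0=LI$; for $t=0,1,2,\dots$: $x_{t+1}=x_t-G_t^{-1}\nabla f(x_t)$, $s_t=x_{t+1}-x_t$,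 $\bar G_t=\mathrm{BFGS}(A,G_t,s_t)$, $\bar u=\bar u(A,\bar G_t)$, $G_{t+1}=\mathrm{BFGS}(A,\bar G_t,\bar u)$. *)

theory Defs
  imports "HOL-Analysis.Analysis"
begin

definition outer :: "real^'n \<Rightarrow> real^'n \<Rightarrow> real^'n^'n" where
  "outer x y = (\<chi> i j. x $ i * y $ j)"

definition qf :: "real^'n^'n \<Rightarrow> real^'n \<Rightarrow> real" where
  "qf M u = u \<bullet> (M *v u)"

definition BFGS :: "real^'n^'n \<Rightarrow> real^'n^'n \<Rightarrow> real^'n \<Rightarrow> real^'n^'n" where
  "BFGS A G u = G - (1 / qf G u) *\<^sub>R outer (G *v u) (u v* G)
                  + (1 / qf A u) *\<^sub>R outer (A *v u) (u v* A)"

definition is_greedy :: "real^'n^'n \<Rightarrow> real^'n^'n \<Rightarrow> real^'n \<Rightarrow> bool" where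
  "is_greedy A G u \<longleftrightarrow> (\<exists>i. u = axis i 1) \<and>
     (\<forall>j. qf G (axis j 1) / qf A (axis j 1) \<le> qf G u / qf A u)"

definition theta :: "real^'n^'n \<Rightarrow> real^'n^'n \<Rightarrow> real^'n \<Rightarrow> real" where
  "theta A G u = sqrt (qf ((G - A) ** matrix_inv A ** (G - A)) u
                       / qf (G ** matrix_inv A ** G) u)"

definition quad_f :: "real^'n^'n \<Rightarrow> real^'n \<Rightarrow> real^'n \<Rightarrow> real" where
  "quad_f A b x = (1/2) * (x \<bullet> (A *v x)) + b \<bullet> x"

definition quad_grad :: "real^'n^'n \<Rightarrow> real^'n \<Rightarrow> real^'n \<Rightarrow> real^'n" where
  "quad_grad A b x = A *v x + b"

definition newton_decr :: "real^'n^'n \<Rightarrow> real^'n \<Rightarrow> real^'n \<Rightarrow> real" where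
  "newton_decr A b x = sqrt (qf (matrix_inv A) (quad_grad A b x))"

definition sharpened_bfgs :: "real^'n^'n \<Rightarrow> real^'n \<Rightarrow> real \<Rightarrow>
    (nat \<Rightarrow> real^'n) \<Rightarrow> (nat \<Rightarrow> real^'n^'n) \<Rightarrow> bool" where
  "sharpened_bfgs A b L x G \<longleftrightarrow>
     G 0 = L *\<^sub>R mat 1 \<and>
     (\<forall>t. x (Suc t) = x t - matrix_inv (G t) *v quad_grad A b (x t) \<and>
          (let Gbar = BFGS A (G t) (x (Suc t) - x t)
           in \<exists>u. is_greedy A Gbar u \<and> G (Suc t) = BFGS A Gbar u))"

end

theory Submission
  imports Defs
begin

text \<open>Write \<open>A \<preceq> G \<preceq> \<eta> A\<close> with \<open>\<eta> = L / \<mu>\<close>. This sandwich holds for \<open>G\<^sub>0 = L I\<close> and is preserved by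
  every BFGS update, since \<open>v\<^sup>T BFGS(A,G,u) v = min\<^sub>\<tau> (v - \<tau> u)\<^sup>T G (v - \<tau> u) + (v\<^sup>T A u)\<^sup>2 / u\<^sup>T A u\<close>,
  while the same expression with \<open>G\<close> replaced by \<open>A\<close> equals \<open>v\<^sup>T A v\<close>.
  Along the iteration \<open>G\<^sub>t s\<^sub>t = -\<nabla>f(x\<^sub>t)\<close> and \<open>\<nabla>f(x\<^sub>t + s\<^sub>t) = -(G\<^sub>t - A) s\<^sub>t\<close>, so \<open>\<theta>(A,G\<^sub>t,s\<^sub>t)\<close> is
  the ratio of consecutive Newton decrements, and both claims reduce to
  \<open>\<parallel>(G - A) s\<parallel>\<^sub>A\<^sub>\<^sup>-\<^sub>\<^sup>1 \<le> (1 - 1/\<eta>) \<parallel>G s\<parallel>\<^sub>A\<^sub>\<^sup>-\<^sub>\<^sup>1\<close>. For this put \<open>z = A\<^sup>-\<^sup>1 G s\<close>: Cauchy-Schwarz for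
  the form of \<open>G - A \<preceq> (\<eta> - 1) A\<close> gives \<open>\<parallel>z - s\<parallel>\<^sub>A\<^sup>2 \<le> (\<eta> - 1) s\<^sup>T (G - A) s\<close>, and together with
  \<open>s\<^sup>T G s \<le> \<eta> s\<^sup>T A s\<close> this is a scalar inequality between \<open>\<parallel>z\<parallel>\<^sub>A\<^sup>2\<close>, \<open>s\<^sup>T G s\<close> and \<open>s\<^sup>T A s\<close>.\<close>

definition sandwiched :: "real^'n^'n \<Rightarrow> real \<Rightarrow> real^'n^'n \<Rightarrow> bool" where
  "sandwiched A \<eta> M \<longleftrightarrow> transpose M = M \<and> (\<forall>v. qf A v \<le> qf M v \<and> qf M v \<le> \<eta> * qf A v)"

lemma invertible_matrix_inv:
  fixes M :: "real^'n^'n"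
  assumes "invertible M"
  shows "M ** matrix_inv M = mat 1" "matrix_inv M ** M = mat 1"
  using someI_ex[OF assms[unfolded invertible_def]] unfolding matrix_inv_def by auto

lemma invertible_if_qf_pos:
  fixes M :: "real^'n^'n"
  assumes "\<And>v. v \<noteq> 0 \<Longrightarrow> 0 < qf M v"
  shows "invertible M"
proof -
  have "M *v v = 0 \<Longrightarrow> v = 0" for v
    using assms[of v] by (auto simp: qf_def)
  then show ?thesis
    using invertible_left_inverse matrix_left_invertible_ker by blast
qed

lemma qf_matrix_inv_mult:
  fixes A :: "real^'n^'n"
  assumes "invertible A"
  shows "qf (matrix_inv A) (A *v v) = qf A v"
  by (simp add: qf_def matrix_vector_mul_assoc invertible_matrix_inv[OF assms] inner_commute)

lemma qf_matrix_inv_nonneg: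
  fixes A :: "real^'n^'n"
  assumes pd: "\<And>v. v \<noteq> 0 \<Longrightarrow> 0 < qf A v"
  shows "0 \<le> qf (matrix_inv A) w"
proof -
  have inv: "invertible A"
    using pd by (rule invertible_if_qf_pos)
  have "w = A *v (matrix_inv A *v w)"
    by (simp add: matrix_vector_mul_assoc invertible_matrix_inv[OF inv])
  then have "qf (matrix_inv A) w = qf A (matrix_inv A *v w)"
    by (metis qf_matrix_inv_mult[OF inv])
  then show ?thesis
    using pd[of "matrix_inv A *v w"] by (cases "matrix_inv A *v w = 0") (auto simp: qf_def)
qed

lemma qf_pos_if_strongly_positive:
  fixes A :: "real^'n^'n"
  assumes "0 < \<mu>" and "\<And>v. \<mu> * (v \<bullet> v) \<le> v \<bullet> (A *v v)" and "v \<noteq> 0"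
  shows "0 < qf A v"
  using assms(2)[of v] mult_pos_pos[OF assms(1), of "v \<bullet> v"] assms(3) by (simp add: qf_def)

lemma qf_uminus [simp]: "qf M (- v) = qf M v"
  by (simp add: qf_def linear_neg[OF matrix_vector_mul_linear])

lemma symmetric_vector_matrix_mult:
  fixes M :: "real^'n^'n"
  assumes "transpose M = M"
  shows "v v* M = M *v v"
  using vector_transpose_matrix[of v M] assms by simp

lemma symmetric_inner_commute:
  fixes M :: "real^'n^'n"
  assumes "transpose M = M"
  shows "u \<bullet> (M *v v) = v \<bullet> (M *v u)"
  by (metis dot_lmul_matrix inner_commute symmetric_vector_matrix_mult[OF assms])

lemma transpose_diff: "transpose (M - N) = transpose M - (transpose N :: real^'n^'m)"
  unfolding transpose_def by (simp add: vec_eq_iff)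

lemma transpose_add: "transpose (M + N) = transpose M + (transpose N :: real^'n^'m)"
  unfolding transpose_def by (simp add: vec_eq_iff)

lemma qf_diff_matrix: "qf (M - N) v = qf M v - qf N v"
  by (simp add: qf_def matrix_vector_mult_diff_rdistrib inner_diff_right)

lemma qf_diff_scaleR:
  fixes M :: "real^'n^'n"
  assumes "transpose M = M"
  shows "qf M (v - t *\<^sub>R u) = qf M v - 2 * t * (v \<bullet> (M *v u)) + t\<^sup>2 * qf M u"
  using symmetric_inner_commute[OF assms, of u v]
  by (simp add: qf_def algebra_simps power2_eq_square)

lemma qf_sandwich_matrix_inv:
  fixes A M :: "real^'n^'n"
  assumes "transpose M = M"
  shows "qf (M ** matrix_inv A ** M) s = qf (matrix_inv A) (M *v s)"
  using symmetric_inner_commute[OF assms, of s "matrix_inv A *v (M *v s)"]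
  by (simp add: qf_def matrix_vector_mul_assoc[symmetric] inner_commute)

lemma qf_cauchy_schwarz:
  fixes P :: "real^'n^'n"
  assumes sym: "transpose P = P" and psd: "\<And>v. 0 \<le> qf P v"
  shows "(u \<bullet> (P *v s))\<^sup>2 \<le> qf P u * qf P s"
proof -
  define q where "q = u \<bullet> (P *v s)"
  have nonneg: "0 \<le> qf P u - 2 * t * q + t\<^sup>2 * qf P s" for t
    using psd[of "u - t *\<^sub>R s"] by (simp add: qf_diff_scaleR[OF sym] q_def)
  show ?thesis
  proof (cases "qf P s = 0")
    case True
    have "q = 0"
      using nonneg[of "(qf P u + 1) / (2 * q)"] True by (cases "q = 0") auto
    then show ?thesis
      using True q_def by simp
  next
    case False
    then have pos: "0 < qf P s"
      using psd[of s] by simp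
    have "0 \<le> qf P u - 2 * (q / qf P s) * q + (q / qf P s)\<^sup>2 * qf P s"
      by (rule nonneg)
    then have "q\<^sup>2 / qf P s \<le> qf P u"
      using pos by (simp add: field_simps power2_eq_square)
    then show ?thesis
      using pos by (simp add: q_def pos_divide_le_eq)
  qed
qed

lemma outer_mult_vec: "outer x y *v v = (y \<bullet> v) *\<^sub>R (x :: real^'n)"
  by (simp add: vec_eq_iff matrix_vector_mult_def outer_def inner_vec_def sum_distrib_left mult_ac)

lemma qf_BFGS:
  fixes A G :: "real^'n^'n"
  assumes "transpose G = G" "transpose A = A"
  shows "qf (BFGS A G u) v = qf G v - (v \<bullet> (G *v u))\<^sup>2 / qf G u + (v \<bullet> (A *v u))\<^sup>2 / qf A u"
  unfolding BFGS_def qf_def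
  by (simp add: algebra_simps scaleR_matrix_vector_assoc[symmetric] outer_mult_vec
      symmetric_vector_matrix_mult[OF assms(1)] symmetric_vector_matrix_mult[OF assms(2)]
      power2_eq_square inner_commute)

lemma transpose_outer: "transpose (outer x y) = outer y (x :: real^'n)"
  unfolding transpose_def outer_def by (simp add: vec_eq_iff mult.commute)

lemma transpose_BFGS:
  fixes A G :: "real^'n^'n"
  assumes "transpose G = G" "transpose A = A"
  shows "transpose (BFGS A G u) = BFGS A G u"
  unfolding BFGS_def symmetric_vector_matrix_mult[OF assms(1)] symmetric_vector_matrix_mult[OF assms(2)]
  by (simp add: transpose_add transpose_diff transpose_scalar transpose_outer assms)

lemma quadratic_ge_vertex_value:
  fixes a b c t :: real
  assumes "0 < c"
  shows "a - b\<^sup>2 / c \<le> a - 2 * t * b + t\<^sup>2 * c"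
proof -
  have "a - 2 * t * b + t\<^sup>2 * c - (a - b\<^sup>2 / c) = (t * c - b)\<^sup>2 / c"
    using assms by (simp add: field_simps power2_eq_square)
  then show ?thesis
    using assms by (metis diff_ge_0_iff_ge zero_le_divide_iff zero_le_power2 less_imp_le)
qed

lemma quadratic_at_vertex:
  fixes a b c :: real
  assumes "0 < c"
  shows "a - 2 * (b / c) * b + (b / c)\<^sup>2 * c = a - b\<^sup>2 / c"
  using assms by (simp add: field_simps power2_eq_square)

text \<open>The lower bound compares \<open>G\<close> and \<open>A\<close> along the line \<open>v - t u\<close> at the minimiser of \<open>G\<close>,
  the upper bound at the minimiser of \<open>A\<close>.\<close>

lemma sandwiched_BFGS:
  fixes A G :: "real^'n^'n"
  assumes sA: "transpose A = A" and pd: "\<And>v. v \<noteq> 0 \<Longrightarrow> 0 < qf A v"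
    and \<eta>: "1 \<le> \<eta>" and G: "sandwiched A \<eta> G"
  shows "sandwiched A \<eta> (BFGS A G u)"
proof -
  have sG: "transpose G = G" and lo: "\<And>v. qf A v \<le> qf G v" and hi: "\<And>v. qf G v \<le> \<eta> * qf A v"
    using G by (auto simp: sandwiched_def)
  have "qf A v \<le> qf (BFGS A G u) v \<and> qf (BFGS A G u) v \<le> \<eta> * qf A v" for v
  proof (cases "u = 0")
    case True
    then show ?thesis
      using qf_BFGS[OF sG sA, of u v] lo[of v] hi[of v] by simp
  next
    case False
    define a where "a = qf A v"
    define b where "b = v \<bullet> (A *v u)"
    define c where "c = qf A u"
    define g1 where "g1 = qf G v"
    define g2 where "g2 = v \<bullet> (G *v u)"
    define g3 where "g3 = qf G u"
    have c: "0 < c"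
      using pd[OF False] c_def by simp
    have g3: "0 < g3"
      using lo[of u] c c_def g3_def by simp
    have BFGS: "qf (BFGS A G u) v = g1 - g2\<^sup>2 / g3 + b\<^sup>2 / c"
      using qf_BFGS[OF sG sA, of u v] by (simp add: b_def c_def g1_def g2_def g3_def)
    have "g1 - g2\<^sup>2 / g3 = qf G (v - (g2 / g3) *\<^sub>R u)"
      using quadratic_at_vertex[OF g3] by (simp add: qf_diff_scaleR[OF sG] g1_def g2_def g3_def)
    also have "\<dots> \<ge> qf A (v - (g2 / g3) *\<^sub>R u)"
      by (rule lo)
    also have "qf A (v - (g2 / g3) *\<^sub>R u) \<ge> a - b\<^sup>2 / c"
      using quadratic_ge_vertex_value[OF c, of a b "g2 / g3"]
      by (simp add: qf_diff_scaleR[OF sA] a_def b_def c_def)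
    finally have lower: "a - b\<^sup>2 / c \<le> g1 - g2\<^sup>2 / g3" .
    have "g1 - g2\<^sup>2 / g3 \<le> qf G (v - (b / c) *\<^sub>R u)"
      using quadratic_ge_vertex_value[OF g3, of g1 g2 "b / c"]
      by (simp add: qf_diff_scaleR[OF sG] g1_def g2_def g3_def)
    also have "\<dots> \<le> \<eta> * qf A (v - (b / c) *\<^sub>R u)"
      by (rule hi)
    also have "qf A (v - (b / c) *\<^sub>R u) = a - b\<^sup>2 / c"
      using quadratic_at_vertex[OF c] by (simp add: qf_diff_scaleR[OF sA] a_def b_def c_def)
    finally have upper: "g1 - g2\<^sup>2 / g3 \<le> \<eta> * (a - b\<^sup>2 / c)" .
    have "b\<^sup>2 / c \<le> \<eta> * (b\<^sup>2 / c)"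
      using mult_right_mono[OF \<eta>, of "b\<^sup>2 / c"] c by simp
    then show ?thesis
      using BFGS lower upper by (simp add: a_def algebra_simps)
  qed
  then show ?thesis
    using transpose_BFGS[OF sG sA] by (simp add: sandwiched_def)
qed

lemma contraction_scalar:
  fixes \<eta> \<alpha> \<beta> \<gamma> :: real
  assumes "1 \<le> \<eta>" "\<gamma> \<le> (1 + \<eta>) * \<beta> - \<eta> * \<alpha>" "\<beta> \<le> \<eta> * \<alpha>"
  shows "\<gamma> - 2 * \<beta> + \<alpha> \<le> (1 - 1 / \<eta>)\<^sup>2 * \<gamma>"
proof -
  have "(2 * \<eta> - 1) * \<gamma> \<le> (2 * \<eta> - 1) * ((1 + \<eta>) * \<beta> - \<eta> * \<alpha>)"
    using assms by (intro mult_left_mono) auto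
  moreover have "0 \<le> (\<eta> - 1) * (\<eta> * \<alpha> - \<beta>)"
    using assms by auto
  ultimately have "\<eta>\<^sup>2 * (\<gamma> - 2 * \<beta> + \<alpha>) \<le> (\<eta> - 1)\<^sup>2 * \<gamma>"
    by (simp add: algebra_simps power2_eq_square)
  also have "(\<eta> - 1)\<^sup>2 = \<eta>\<^sup>2 * (1 - 1 / \<eta>)\<^sup>2"
    using assms by (simp add: field_simps)
  finally show ?thesis
    using assms by (simp add: mult.assoc)
qed

lemma qf_diff_le_contraction:
  fixes A M :: "real^'n^'n"
  assumes sA: "transpose A = A" and psd: "\<And>v. 0 \<le> qf A v"
    and \<eta>: "1 \<le> \<eta>" and M: "sandwiched A \<eta> M"
    and z: "A *v z = M *v s"
  shows "qf A (z - s) \<le> (1 - 1 / \<eta>)\<^sup>2 * qf A z"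
proof -
  have sM: "transpose M = M" and lo: "\<And>v. qf A v \<le> qf M v" and hi: "\<And>v. qf M v \<le> \<eta> * qf A v"
    using M by (auto simp: sandwiched_def)
  define P where "P = M - A"
  have sP: "transpose P = P"
    using sA sM by (simp add: P_def transpose_diff)
  have qf_P: "qf P v = qf M v - qf A v" for v
    by (simp add: P_def qf_diff_matrix)
  have psd_P: "0 \<le> qf P v" for v
    using lo[of v] by (simp add: qf_P)
  define X where "X = qf A (z - s)"
  have X: "X = (z - s) \<bullet> (P *v s)"
    by (simp add: X_def qf_def P_def matrix_vector_mult_diff_distrib
        matrix_vector_mult_diff_rdistrib z)
  have "X\<^sup>2 \<le> qf P (z - s) * qf P s"
    unfolding X by (rule qf_cauchy_schwarz[OF sP psd_P])
  also have "\<dots> \<le> ((\<eta> - 1) * X) * qf P s"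
    using hi[of "z - s"] psd_P[of s] by (intro mult_right_mono) (simp_all add: qf_P X_def algebra_simps)
  finally have "X * X \<le> X * ((\<eta> - 1) * qf P s)"
    by (simp add: power2_eq_square mult_ac)
  then have X_le: "X \<le> (\<eta> - 1) * (qf M s - qf A s)"
    using psd[of "z - s"] \<eta> psd_P[of s] unfolding X_def qf_P
    by (cases "X = 0") (auto simp: X_def mult_le_cancel_left)
  have X_expand: "X = qf A z - 2 * qf M s + qf A s"
    using qf_diff_scaleR[OF sA, of z 1 s] symmetric_inner_commute[OF sA, of z s]
    by (simp add: X_def z qf_def)
  have "qf A z \<le> (1 + \<eta>) * qf M s - \<eta> * qf A s"
    using X_le X_expand by (simp add: algebra_simps)
  then show ?thesis
    using contraction_scalar[OF \<eta> _ hi[of s]] X_expand by (simp add: X_def)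
qed

lemma qf_matrix_inv_diff_le:
  fixes A M :: "real^'n^'n"
  assumes sA: "transpose A = A" and pd: "\<And>v. v \<noteq> 0 \<Longrightarrow> 0 < qf A v"
    and \<eta>: "1 \<le> \<eta>" and M: "sandwiched A \<eta> M"
  shows "qf (matrix_inv A) ((M - A) *v s) \<le> (1 - 1 / \<eta>)\<^sup>2 * qf (matrix_inv A) (M *v s)"
proof -
  have inv: "invertible A"
    using pd by (rule invertible_if_qf_pos)
  have psd: "0 \<le> qf A v" for v
    using pd[of v] by (cases "v = 0") (auto simp: qf_def)
  define z where "z = matrix_inv A *v (M *v s)"
  have z: "A *v z = M *v s"
    unfolding z_def matrix_vector_mul_assoc[of A] invertible_matrix_inv(1)[OF inv] by simp
  have "(M - A) *v s = A *v (z - s)"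
    by (simp add: z matrix_vector_mult_diff_distrib matrix_vector_mult_diff_rdistrib)
  then show ?thesis
    using qf_diff_le_contraction[OF sA psd \<eta> M z]
    by (simp add: z[symmetric] qf_matrix_inv_mult[OF inv])
qed

lemma theta_le:
  fixes A M :: "real^'n^'n"
  assumes sA: "transpose A = A" and pd: "\<And>v. v \<noteq> 0 \<Longrightarrow> 0 < qf A v"
    and \<eta>: "1 \<le> \<eta>" and M: "sandwiched A \<eta> M"
  shows "theta A M s \<le> 1 - 1 / \<eta>"
proof -
  have sM: "transpose M = M"
    using M by (simp add: sandwiched_def)
  define num where "num = qf (matrix_inv A) ((M - A) *v s)"
  define den where "den = qf (matrix_inv A) (M *v s)"
  have "num \<le> (1 - 1 / \<eta>)\<^sup>2 * den"
    unfolding num_def den_def by (rule qf_matrix_inv_diff_le[OF sA pd \<eta> M])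
  moreover have "0 \<le> den"
    unfolding den_def by (rule qf_matrix_inv_nonneg[OF pd])
  ultimately have "num / den \<le> (1 - 1 / \<eta>)\<^sup>2"
    by (cases "den = 0") (simp_all add: pos_divide_le_eq)
  then have "sqrt (num / den) \<le> 1 - 1 / \<eta>"
    using \<eta> real_sqrt_le_mono by fastforce
  moreover have "theta A M s = sqrt (num / den)"
    using sA sM by (simp add: theta_def num_def den_def qf_sandwich_matrix_inv transpose_diff)
  ultimately show ?thesis
    by simp
qed

lemma newton_decr_quasi_newton_step:
  fixes A G :: "real^'n^'n"
  assumes sA: "transpose A = A" and pd: "\<And>v. v \<noteq> 0 \<Longrightarrow> 0 < qf A v"
    and \<eta>: "1 \<le> \<eta>" and G: "sandwiched A \<eta> G"
    and x': "x' = x - matrix_inv G *v quad_grad A b x"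
  shows "newton_decr A b x' \<le> (1 - 1 / \<eta>) * newton_decr A b x"
proof -
  have "invertible G"
    using pd G by (intro invertible_if_qf_pos) (meson less_le_trans sandwiched_def)
  define s where "s = x' - x"
  have Gs: "G *v s = - quad_grad A b x"
    by (simp add: s_def x' linear_neg[OF matrix_vector_mul_linear] matrix_vector_mul_assoc
        invertible_matrix_inv[OF \<open>invertible G\<close>])
  have "quad_grad A b x' = - ((G - A) *v s)"
    using Gs by (simp add: quad_grad_def s_def algebra_simps)
  then have "newton_decr A b x' = sqrt (qf (matrix_inv A) ((G - A) *v s))"
    by (simp add: newton_decr_def)
  also have "\<dots> \<le> sqrt ((1 - 1 / \<eta>)\<^sup>2 * qf (matrix_inv A) (G *v s))"
    using qf_matrix_inv_diff_le[OF sA pd \<eta> G] by (rule real_sqrt_le_mono)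
  also have "\<dots> = (1 - 1 / \<eta>) * newton_decr A b x"
    using \<eta> by (simp add: newton_decr_def Gs real_sqrt_mult)
  finally show ?thesis .
qed

lemma sharpened_bfgs_sandwiched:
  fixes A :: "real^'n^'n"
  assumes \<mu>: "0 < \<mu>" "\<mu> \<le> L" and sA: "transpose A = A"
    and lower: "\<And>v. \<mu> * (v \<bullet> v) \<le> v \<bullet> (A *v v)"
    and upper: "\<And>v. v \<bullet> (A *v v) \<le> L * (v \<bullet> v)"
    and bfgs: "sharpened_bfgs A b L x G"
  shows "sandwiched A (L / \<mu>) (G t)"
proof (induction t)
  case 0
  have G0: "G 0 = L *\<^sub>R mat 1"
    using bfgs by (simp add: sharpened_bfgs_def)
  have "L * (v \<bullet> v) \<le> L / \<mu> * qf A v" for v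
    using mult_left_mono[OF lower[of v], of "L / \<mu>"] \<mu> by (simp add: qf_def)
  then show ?case
    using upper by (simp add: sandwiched_def G0 qf_def transpose_scalar
        scaleR_matrix_vector_assoc[symmetric])
next
  case (Suc t)
  have \<eta>: "1 \<le> L / \<mu>"
    using \<mu> by simp
  have pd: "0 < qf A v" if "v \<noteq> 0" for v
    using qf_pos_if_strongly_positive[OF \<mu>(1) lower that] .
  obtain u where "G (Suc t) = BFGS A (BFGS A (G t) (x (Suc t) - x t)) u"
    using bfgs unfolding sharpened_bfgs_def Let_def by blast
  then show ?case
    using sandwiched_BFGS[OF sA pd \<eta>] Suc by simp
qed

theorem theorem1:
  fixes A :: "real^'n^'n" and b :: "real^'n" and \<mu> L :: real
    and x :: "nat \<Rightarrow> real^'n" and G :: "nat \<Rightarrow> real^'n^'n"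
  assumes "0 < \<mu>" and "\<mu> \<le> L"
    and "transpose A = A"
    and "\<And>v. \<mu> * (v \<bullet> v) \<le> v \<bullet> (A *v v)"
    and "\<And>v. v \<bullet> (A *v v) \<le> L * (v \<bullet> v)"
    and "sharpened_bfgs A b L x G"
  shows "\<forall>t. (\<forall>s\<le>t. quad_grad A b (x s) \<noteq> 0) \<longrightarrow>
           theta A (G t) (x (Suc t) - x t) \<le> 1 - \<mu> / L \<and>
           newton_decr A b (x t) \<le> (1 - \<mu> / L) ^ t * newton_decr A b (x 0)"
proof -
  have \<eta>: "1 \<le> L / \<mu>" and rate: "1 - 1 / (L / \<mu>) = 1 - \<mu> / L" and "0 \<le> 1 - \<mu> / L"
    using assms(1,2) by auto
  have pd: "0 < qf A v" if "v \<noteq> 0" for v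
    using qf_pos_if_strongly_positive[OF assms(1,4) that] .
  note G = sharpened_bfgs_sandwiched[OF assms]
  have theta: "theta A (G t) (x (Suc t) - x t) \<le> 1 - \<mu> / L" for t
    using theta_le[OF assms(3) pd \<eta> G] rate by simp
  have step: "newton_decr A b (x (Suc t)) \<le> (1 - \<mu> / L) * newton_decr A b (x t)" for t
    using newton_decr_quasi_newton_step[OF assms(3) pd \<eta> G] assms(6) rate
    by (simp add: sharpened_bfgs_def)
  have "newton_decr A b (x t) \<le> (1 - \<mu> / L) ^ t * newton_decr A b (x 0)" for t
  proof (induction t)
    case (Suc t)
    show ?case
      using order_trans[OF step mult_left_mono[OF Suc \<open>0 \<le> 1 - \<mu> / L\<close>]] by (simp add: mult_ac)
  qed simp
  then show ?thesis
    using theta by blast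
qed

end
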